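(* Let $n\ge 1$ and $\mathbb{T}=\mathbb{R}/2\pi\mathbb{Z}$. Let $G$ be the set of $2n\times 2n$ block matrices $$Q(A,B)=\begin{pmatrix} A & 0\\ B & (A^{T})^{-1}\end{pmatrix},$$ where $A\in \mathrm{GL}_n(\mathbb{Z})$ and $B$ is an $n\times n$ matrix with entries in $\mathbb{T}$ such that $A^{T}B$ is symmetric (as a $\mathbb{T}$-valued matrix), equipped with block matrix multiplication, i.e. $$Q(A_1,B_1)\,Q(A_2,B_2)=Q\big(A_1A_2,\; B_1A_2+(A_1^{T})^{-1}B_2\big),$$ with all entries of the lower-left block taken modulo $2\pi$. Then $G$ is a group; the subset $N=\{Q(I_n,C): C\in\mathbb{T}^{n\times n}\text{ symmetric}\}$ is a normal subgroup of $G$ isomorphic to $\mathrm{U}(1)^{n(n+1)/2}$; the subset $H=\{Q(A,0): A\in\mathrm{GL}_n(\mathbb{Z})\}$ is a subgroup isomorphic to $\mathrm{GL}_n(\mathbb{Z})$; every element of $G$ is a product of an element of $H$ and an element of $N$; and consequently $G\cong \mathrm{U}(1)^{n(n+1)/2}\rtimes \mathrm{GL}_n(\mathbb{Z})$.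
   Context: Products of an integer matrix with a $\mathbb{T}$-valued matrix (and sums of $\mathbb{T}$-valued matrices) are well defined modulo $2\pi$. The matrices $Q(A,B)$ are the "rotor symplectic transformations": they describe how $n$-rotor Clifford unitaries act by conjugation on rotor Pauli operators, where a Pauli string is represented by a vector $(\vec m\,|\,\vec\phi)\in\mathbb{Z}^n\times\mathbb{T}^n$ and the transformations must map such vectors to such vectors while preserving the symplectic form $(\vec m_u,\vec\phi_u),(\vec m_v,\vec\phi_v)\mapsto \vec m_u^{T}\vec\phi_v-\vec\phi_u^{T}\vec m_v \pmod{2\pi}$. $\mathrm{U}(1)^{n(n+1)/2}$ is identified with the additive group of symmetric $n\times n$ matrices over $\mathbb{T}$. *)

theory Defs
  imports "HOL-Analysis.Analysis" "HOL-Algebra.Algebra"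
begin

definition torus_rel :: "real \<Rightarrow> real \<Rightarrow> bool" where
  "torus_rel x y \<longleftrightarrow> (\<exists>k::int. x - y = 2 * pi * of_int k)"

lemma torus_rel_equivp: "equivp torus_rel"
proof (rule equivpI)
  show "reflp torus_rel" unfolding reflp_def torus_rel_def by (intro allI exI[of _ 0]) simp
  show "symp torus_rel" unfolding symp_def torus_rel_def
  proof (intro allI impI)
    fix x y assume "\<exists>k::int. x - y = 2 * pi * of_int k"
    then obtain k :: int where "x - y = 2 * pi * of_int k" by blast
    then have "y - x = 2 * pi * of_int (- k)" by simp
    then show "\<exists>k::int. y - x = 2 * pi * of_int k" by blast
  qed
  show "transp torus_rel" unfolding transp_def torus_rel_def
  proof (intro allI impI)
    fix x y z assume "\<exists>k::int. x - y = 2 * pi * of_int k" "\<exists>k::int. y - z = 2 * pi * of_int k"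
    then obtain k l :: int where "x - y = 2 * pi * of_int k" "y - z = 2 * pi * of_int l" by blast
    then have "x - z = 2 * pi * of_int (k + l)" by (simp add: algebra_simps)
    then show "\<exists>k::int. x - z = 2 * pi * of_int k" by blast
  qed
qed

quotient_type torus = real / torus_rel
  by (rule torus_rel_equivp)

instantiation torus :: ab_group_add
begin

lift_definition zero_torus :: torus is "0::real" .

lift_definition plus_torus :: "torus \<Rightarrow> torus \<Rightarrow> torus" is "(+)"
proof -
  fix x x' y y' :: real
  assume "torus_rel x x'" "torus_rel y y'"
  then obtain k l :: int where "x - x' = 2 * pi * of_int k" "y - y' = 2 * pi * of_int l"
    unfolding torus_rel_def by blast
  then have "x + y - (x' + y') = 2 * pi * of_int (k + l)" by (simp add: algebra_simps)
  then show "torus_rel (x + y) (x' + y')" unfolding torus_rel_def by blast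
qed

lift_definition uminus_torus :: "torus \<Rightarrow> torus" is uminus
proof -
  fix x x' :: real
  assume "torus_rel x x'"
  then obtain k :: int where "x - x' = 2 * pi * of_int k" unfolding torus_rel_def by blast
  then have "- x - (- x') = 2 * pi * of_int (- k)" by (simp add: algebra_simps)
  then show "torus_rel (- x) (- x')" unfolding torus_rel_def by blast
qed

definition minus_torus :: "torus \<Rightarrow> torus \<Rightarrow> torus" where
  "minus_torus a b = a + (- b)"

instance
proof
  fix a b c :: torus
  show "a + b + c = a + (b + c)" by transfer (simp add: add.assoc equivp_reflp[OF torus_rel_equivp])
  show "a + b = b + a" by transfer (simp add: add.commute equivp_reflp[OF torus_rel_equivp])
  show "0 + a = a" by transfer (simp add: equivp_reflp[OF torus_rel_equivp])
  show "- a + a = 0" by transfer (simp add: equivp_reflp[OF torus_rel_equivp])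
  show "a - b = a + - b" by (simp add: minus_torus_def)
qed

end

lift_definition tsmul :: "int \<Rightarrow> torus \<Rightarrow> torus" is "\<lambda>k x. of_int k * x"
proof -
  fix k :: int and x x' :: real
  assume "torus_rel x x'"
  then obtain m :: int where "x - x' = 2 * pi * of_int m" unfolding torus_rel_def by blast
  then have "of_int k * x - of_int k * x' = 2 * pi * of_int (k * m)"
    by (simp add: algebra_simps right_diff_distrib[symmetric])
  then show "torus_rel (of_int k * x) (of_int k * x')" unfolding torus_rel_def by blast
qed

definition imult :: "int^'n^'m \<Rightarrow> torus^'p^'n \<Rightarrow> torus^'p^'m" where
  "imult A B = (\<chi> i j. \<Sum>k\<in>UNIV. tsmul (A $ i $ k) (B $ k $ j))"

definition multi :: "torus^'n^'m \<Rightarrow> int^'p^'n \<Rightarrow> torus^'p^'m" where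
  "multi B A = (\<chi> i j. \<Sum>k\<in>UNIV. tsmul (A $ k $ j) (B $ i $ k))"

text \<open>The block matrix Q(A,B) = [[A, 0], [B, (A^T)^{-1}]] is determined by the pair (A,B);
  we represent Q(A,B) by the pair (A,B).\<close>

definition rotor_group :: "((int^'n^'n) \<times> (torus^'n^'n)) monoid" where
  "rotor_group =
    \<lparr> carrier = {(A, B). invertible A \<and> transpose (imult (transpose A) B) = imult (transpose A) B},
      mult = (\<lambda>(A1, B1) (A2, B2).
               (A1 ** A2, multi B1 A2 + imult (transpose (matrix_inv A1)) B2)),
      one = (mat 1, 0) \<rparr>"

definition N_set :: "((int^'n^'n) \<times> (torus^'n^'n)) set" where
  "N_set = {(mat 1, C) | C. transpose C = C}"

definition H_set :: "((int^'n^'n) \<times> (torus^'n^'n)) set" where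
  "H_set = {(A, 0) | A. invertible A}"

definition GLZ :: "(int^'n^'n) monoid" where
  "GLZ = \<lparr> carrier = {A. invertible A}, mult = (**), one = mat 1 \<rparr>"

text \<open>U(1)^{n(n+1)/2}, identified (as in the paper) with the additive group of
  symmetric n x n matrices over T.\<close>
definition U1_pow :: "(torus^'n^'n) monoid" where
  "U1_pow = \<lparr> carrier = {C. transpose C = C}, mult = (+), one = 0 \<rparr>"

text \<open>Action of GL_n(Z) on the symmetric T-matrices by conjugation inside G:
  Q(A,0) Q(I,C) Q(A,0)^{-1} = Q(I, (A^T)^{-1} C A^{-1}).\<close>
definition conj_action :: "int^'n^'n \<Rightarrow> torus^'n^'n \<Rightarrow> torus^'n^'n" where
  "conj_action A C = multi (imult (transpose (matrix_inv A)) C) (matrix_inv A)"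

definition semidirect_prod ::
  "('a, 'c) monoid_scheme \<Rightarrow> ('b, 'd) monoid_scheme \<Rightarrow> ('b \<Rightarrow> 'a \<Rightarrow> 'a) \<Rightarrow> ('a \<times> 'b) monoid" where
  "semidirect_prod N H phi =
    \<lparr> carrier = carrier N \<times> carrier H,
      mult = (\<lambda>(n1, h1) (n2, h2). (n1 \<otimes>\<^bsub>N\<^esub> phi h1 n2, h1 \<otimes>\<^bsub>H\<^esub> h2)),
      one = (\<one>\<^bsub>N\<^esub>, \<one>\<^bsub>H\<^esub>) \<rparr>"

end

theory Submission
  imports Defs
begin

text \<open>The first block, Q(A,B) \<mapsto> A, is a homomorphism from G onto GL_n(Z) with kernel N and
  with the section A \<mapsto> Q(A,0), whose image is H; so G is a split extension of GL_n(Z) by N.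
  Concretely Q(A,B) = Q(I,C) Q(A,0) with C = B A^-1 symmetric, and in the coordinates (C, A) the
  product of G becomes (C1, A1) (C2, A2) = (C1 + (A1^-1)^T C2 A1^-1, A1 A2): the semidirect
  product for the action of GL_n(Z) on symmetric T-valued matrices by congruence. All matrix
  identities needed reduce to the associativity of the mixed integer/T-valued products, which
  holds because T is a Z-module.\<close>

section \<open>Products of integer and circle-valued matrices\<close>

lemma torus_rel_refl [simp]: "torus_rel x x"
  by (rule equivp_reflp[OF torus_rel_equivp])

lemma tsmul_add: "tsmul k (x + y) = tsmul k x + tsmul k y"
  by transfer (simp add: distrib_left)

lemma tsmul_add_left: "tsmul (k + l) x = tsmul k x + tsmul l x"
  by transfer (simp add: distrib_right)

lemma tsmul_mult: "tsmul (k * l) x = tsmul k (tsmul l x)"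
  by transfer (simp add: mult.assoc)

lemma tsmul_one [simp]: "tsmul 1 x = x"
  by transfer simp

lemma tsmul_zero_left [simp]: "tsmul 0 x = 0"
  by transfer simp

lemma tsmul_zero [simp]: "tsmul k 0 = 0"
  by transfer simp

lemma tsmul_minus: "tsmul k (- x) = - tsmul k x"
  by transfer simp

lemma tsmul_sum: "tsmul k (sum f S) = (\<Sum>i\<in>S. tsmul k (f i))"
  by (induction S rule: infinite_finite_induct) (auto simp: tsmul_add)

lemma tsmul_sum_left: "tsmul (sum f S) x = (\<Sum>i\<in>S. tsmul (f i) x)"
  by (induction S rule: infinite_finite_induct) (auto simp: tsmul_add_left)

lemma imult_imult: "imult A (imult B C) = imult (A ** B) C"
  unfolding imult_def matrix_matrix_mult_def
  by (simp add: vec_eq_iff tsmul_sum tsmul_sum_left flip: tsmul_mult) (intro allI sum.swap)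

lemma multi_multi: "multi (multi C A) B = multi C (A ** B)"
  unfolding multi_def matrix_matrix_mult_def
  by (simp add: vec_eq_iff tsmul_sum tsmul_sum_left mult.commute flip: tsmul_mult) (intro allI sum.swap)

lemma multi_imult: "multi (imult A C) B = imult A (multi C B)"
  unfolding multi_def imult_def
  by (simp add: vec_eq_iff tsmul_sum mult.commute flip: tsmul_mult) (intro allI sum.swap)

lemma transpose_imult: "transpose (imult A C) = multi (transpose C) (transpose A)"
  unfolding multi_def imult_def transpose_def by (simp add: vec_eq_iff)

lemma transpose_multi: "transpose (multi C A) = imult (transpose A) (transpose C)"
  unfolding multi_def imult_def transpose_def by (simp add: vec_eq_iff)

lemma imult_mat_1 [simp]: "imult (mat 1) C = C"
  unfolding imult_def mat_def by (simp add: vec_eq_iff if_distrib if_distribR cong del: if_weak_cong)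

lemma multi_mat_1 [simp]: "multi C (mat 1) = C"
  unfolding multi_def mat_def by (simp add: vec_eq_iff if_distrib if_distribR cong del: if_weak_cong)

lemma imult_add: "imult A (C + D) = imult A C + imult A D"
  unfolding imult_def by (simp add: vec_eq_iff tsmul_add sum.distrib)

lemma multi_add: "multi (C + D) A = multi C A + multi D A"
  unfolding multi_def by (simp add: vec_eq_iff tsmul_add sum.distrib)

lemma imult_zero [simp]: "imult A 0 = 0"
  unfolding imult_def by (simp add: vec_eq_iff)

lemma multi_zero [simp]: "multi 0 A = 0"
  unfolding multi_def by (simp add: vec_eq_iff)

lemma multi_uminus: "multi (- C) A = - multi C A"
  unfolding multi_def by (simp add: vec_eq_iff tsmul_minus sum_negf)

lemma transpose_add: "transpose (C + D) = transpose C + transpose (D :: 'a::ab_group_add^'n^'m)"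
  unfolding transpose_def by (simp add: vec_eq_iff)

lemma transpose_uminus: "transpose (- C) = - transpose (C :: 'a::ab_group_add^'n^'m)"
  unfolding transpose_def by (simp add: vec_eq_iff)

lemma transpose_zero [simp]: "transpose (0 :: 'a::zero^'n^'m) = 0"
  unfolding transpose_def by (simp add: vec_eq_iff)

lemma matrix_inv_right: "invertible (A :: 'a::semiring_1^'n^'m) \<Longrightarrow> A ** matrix_inv A = mat 1"
  unfolding invertible_def matrix_inv_def by (rule someI_ex[THEN conjunct1])

lemma matrix_inv_left: "invertible (A :: 'a::semiring_1^'n^'m) \<Longrightarrow> matrix_inv A ** A = mat 1"
  unfolding invertible_def matrix_inv_def by (rule someI_ex[THEN conjunct2])

lemma matrix_inv_unique:
  fixes A :: "'a::semiring_1^'n^'n"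
  assumes "A ** A' = mat 1" and "A' ** A = mat 1"
  shows "matrix_inv A = A'"
proof -
  have "invertible A" using assms unfolding invertible_def by blast
  have "matrix_inv A = matrix_inv A ** (A ** A')" using assms(1) by simp
  also have "\<dots> = (matrix_inv A ** A) ** A'" by (simp add: matrix_mul_assoc)
  also have "\<dots> = A'" using matrix_inv_left[OF \<open>invertible A\<close>] by simp
  finally show ?thesis .
qed

lemma invertible_mat_1: "invertible (mat 1 :: 'a::semiring_1^'n^'n)"
  unfolding invertible_def by (intro exI[of _ "mat 1"]) simp

lemma invertible_matrix_inv: "invertible (A :: 'a::semiring_1^'n^'m) \<Longrightarrow> invertible (matrix_inv A)"
  unfolding invertible_def using matrix_inv_left matrix_inv_right invertible_def by blast

lemma matrix_inv_matrix_inv: "invertible (A :: 'a::semiring_1^'n^'n) \<Longrightarrow> matrix_inv (matrix_inv A) = A"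
  by (rule matrix_inv_unique) (simp_all add: matrix_inv_left matrix_inv_right)

lemma matrix_inv_mat_1: "matrix_inv (mat 1 :: 'a::semiring_1^'n^'n) = mat 1"
  by (rule matrix_inv_unique) simp_all

lemma matrix_inv_mult:
  fixes A B :: "'a::semiring_1^'n^'n"
  assumes "invertible A" and "invertible B"
  shows "matrix_inv (A ** B) = matrix_inv B ** matrix_inv A"
proof (rule matrix_inv_unique)
  have "A ** B ** (matrix_inv B ** matrix_inv A) = A ** (B ** matrix_inv B) ** matrix_inv A"
    by (simp add: matrix_mul_assoc)
  then show "A ** B ** (matrix_inv B ** matrix_inv A) = mat 1"
    using assms by (simp add: matrix_inv_right)
  have "matrix_inv B ** matrix_inv A ** (A ** B) = matrix_inv B ** (matrix_inv A ** A) ** B"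
    by (simp add: matrix_mul_assoc)
  then show "matrix_inv B ** matrix_inv A ** (A ** B) = mat 1"
    using assms by (simp add: matrix_inv_left)
qed

lemma transpose_matrix_inv_left:
  "invertible (A :: 'a::comm_semiring_1^'n^'n) \<Longrightarrow> transpose (matrix_inv A) ** transpose A = mat 1"
  by (metis matrix_inv_right matrix_transpose_mul transpose_mat)

lemma imult_inv_transpose_cancel:
  "invertible (A :: int^'n^'n) \<Longrightarrow> imult (transpose (matrix_inv A)) (imult (transpose A) B) = B"
  by (simp add: imult_imult transpose_matrix_inv_left)

lemma multi_inv_cancel: "invertible (A :: int^'n^'n) \<Longrightarrow> multi (multi B A) (matrix_inv A) = B"
  by (simp add: multi_multi matrix_inv_right)

lemma multi_cancel_inv: "invertible (A :: int^'n^'n) \<Longrightarrow> multi (multi B (matrix_inv A)) A = B"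
  by (simp add: multi_multi matrix_inv_left)

section \<open>Congruence of circle-valued matrices\<close>

definition matrix_congr :: "int^'m^'n \<Rightarrow> torus^'n^'n \<Rightarrow> torus^'m^'m" where
  "matrix_congr A S = multi (imult (transpose A) S) A"

lemma transpose_matrix_congr:
  "transpose S = S \<Longrightarrow> transpose (matrix_congr A S) = matrix_congr A S"
  unfolding matrix_congr_def by (simp add: transpose_multi transpose_imult multi_imult)

lemma matrix_congr_add: "matrix_congr A (S + T) = matrix_congr A S + matrix_congr A T"
  unfolding matrix_congr_def by (simp add: imult_add multi_add)

lemma matrix_congr_mat_1 [simp]: "matrix_congr (mat 1) S = S"
  unfolding matrix_congr_def by simp

lemma matrix_congr_mult: "matrix_congr (A ** B) S = matrix_congr B (matrix_congr A S)"
  unfolding matrix_congr_def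
  by (simp add: matrix_transpose_mul multi_imult flip: imult_imult multi_multi)

lemma matrix_congr_inv_congr:
  "invertible (A :: int^'n^'n) \<Longrightarrow> matrix_congr (matrix_inv A) (matrix_congr A S) = S"
  by (simp add: matrix_inv_right flip: matrix_congr_mult)

lemma matrix_congr_congr_inv:
  "invertible (A :: int^'n^'n) \<Longrightarrow> matrix_congr A (matrix_congr (matrix_inv A) S) = S"
  by (simp add: matrix_inv_left flip: matrix_congr_mult)

lemma imult_transpose_multi: "imult (transpose A) (multi C A) = matrix_congr A C"
  unfolding matrix_congr_def by (simp add: multi_imult)

lemma conj_action_eq_matrix_congr: "conj_action A C = matrix_congr (matrix_inv A) C"
  unfolding conj_action_def matrix_congr_def ..

lemma transpose_conj_action:
  "transpose C = C \<Longrightarrow> transpose (conj_action A C) = conj_action A C"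
  by (simp add: conj_action_eq_matrix_congr transpose_matrix_congr)

section \<open>The group of rotor symplectic transformations\<close>

lemma rotor_carrier:
  "(A, B) \<in> carrier rotor_group
    \<longleftrightarrow> invertible A \<and> transpose (imult (transpose A) B) = imult (transpose A) B"
  unfolding rotor_group_def by simp

lemma rotor_mult:
  "(A1, B1) \<otimes>\<^bsub>rotor_group\<^esub> (A2, B2)
    = (A1 ** A2, multi B1 A2 + imult (transpose (matrix_inv A1)) B2)"
  unfolding rotor_group_def by simp

lemma rotor_one: "\<one>\<^bsub>rotor_group\<^esub> = (mat 1, 0)"
  unfolding rotor_group_def by simp

text \<open>The symmetry of A^T B is equivalent to that of B A^-1 = (A^-1)^T (A^T B) A^-1, the
  N-component of Q(A,B) = Q(I, B A^-1) Q(A,0).\<close>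
lemma rotor_carrier_iff_factor:
  "(A, B) \<in> carrier rotor_group
    \<longleftrightarrow> invertible A \<and> transpose (multi B (matrix_inv A)) = multi B (matrix_inv A)"
proof (cases "invertible A")
  case True
  then have "imult (transpose A) B = matrix_congr A (multi B (matrix_inv A))"
    by (metis imult_transpose_multi multi_cancel_inv)
  moreover have "multi B (matrix_inv A) = matrix_congr (matrix_inv A) (imult (transpose A) B)"
    using True by (simp add: matrix_congr_def multi_imult imult_inv_transpose_cancel)
  ultimately show ?thesis
    by (metis rotor_carrier transpose_matrix_congr)
qed (simp add: rotor_carrier)

lemma rotor_mult_factor:
  fixes A1 A2 :: "int^'n^'n"
  assumes "invertible A1" and "invertible A2"
  shows "multi (multi B1 A2 + imult (transpose (matrix_inv A1)) B2) (matrix_inv (A1 ** A2))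
    = multi B1 (matrix_inv A1) + conj_action A1 (multi B2 (matrix_inv A2))"
  using assms
  by (simp add: matrix_inv_mult multi_add multi_inv_cancel multi_imult conj_action_def
      flip: multi_multi)

lemma rotor_left_inverse:
  assumes "(A, B) \<in> carrier rotor_group"
  defines "A' \<equiv> matrix_inv A" and "B' \<equiv> - multi (imult (transpose A) B) (matrix_inv A)"
  shows "(A', B') \<in> carrier rotor_group"
    and "(A', B') \<otimes>\<^bsub>rotor_group\<^esub> (A, B) = \<one>\<^bsub>rotor_group\<^esub>"
proof -
  have A: "invertible A" and S: "transpose (imult (transpose A) B) = imult (transpose A) B"
    using assms(1) by (simp_all add: rotor_carrier)
  have "multi B' (matrix_inv A') = - imult (transpose A) B"
    using A by (simp add: A'_def B'_def matrix_inv_matrix_inv multi_uminus multi_cancel_inv)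
  then show "(A', B') \<in> carrier rotor_group"
    using A S by (simp add: rotor_carrier_iff_factor A'_def invertible_matrix_inv transpose_uminus)
  show "(A', B') \<otimes>\<^bsub>rotor_group\<^esub> (A, B) = \<one>\<^bsub>rotor_group\<^esub>"
    using A by (simp add: A'_def B'_def rotor_mult rotor_one matrix_inv_left matrix_inv_matrix_inv
        multi_uminus multi_cancel_inv)
qed

lemma rotor_group_is_group: "group rotor_group"
proof (rule groupI)
  fix x y :: "(int^'n^'n) \<times> (torus^'n^'n)"
  assume "x \<in> carrier rotor_group" and "y \<in> carrier rotor_group"
  then show "x \<otimes>\<^bsub>rotor_group\<^esub> y \<in> carrier rotor_group"
    by (cases x, cases y)
      (simp add: rotor_carrier_iff_factor rotor_mult rotor_mult_factor invertible_mult transpose_add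
        transpose_conj_action)
next
  show "\<one>\<^bsub>rotor_group\<^esub> \<in> carrier rotor_group"
    by (simp add: rotor_one rotor_carrier invertible_mat_1)
next
  fix x y z :: "(int^'n^'n) \<times> (torus^'n^'n)"
  assume "x \<in> carrier rotor_group" and "y \<in> carrier rotor_group" and "z \<in> carrier rotor_group"
  then show "x \<otimes>\<^bsub>rotor_group\<^esub> y \<otimes>\<^bsub>rotor_group\<^esub> z = x \<otimes>\<^bsub>rotor_group\<^esub> (y \<otimes>\<^bsub>rotor_group\<^esub> z)"
    by (cases x, cases y, cases z)
      (simp add: rotor_carrier rotor_mult matrix_mul_assoc matrix_inv_mult matrix_transpose_mul
        multi_add imult_add multi_multi multi_imult imult_imult add.assoc)
next
  fix x :: "(int^'n^'n) \<times> (torus^'n^'n)"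
  show "\<one>\<^bsub>rotor_group\<^esub> \<otimes>\<^bsub>rotor_group\<^esub> x = x"
    by (cases x) (simp add: rotor_one rotor_mult matrix_inv_mat_1)
  assume "x \<in> carrier rotor_group"
  then show "\<exists>y\<in>carrier rotor_group. y \<otimes>\<^bsub>rotor_group\<^esub> x = \<one>\<^bsub>rotor_group\<^esub>"
    by (cases x) (blast dest: rotor_left_inverse)
qed

section \<open>The split extension\<close>

lemma GLZ_group: "group GLZ"
proof (rule groupI)
  fix A :: "int^'n^'n"
  assume "A \<in> carrier GLZ"
  then show "\<exists>A'\<in>carrier GLZ. A' \<otimes>\<^bsub>GLZ\<^esub> A = \<one>\<^bsub>GLZ\<^esub>"
    unfolding GLZ_def
    by (intro bexI[of _ "matrix_inv A"]) (simp_all add: matrix_inv_left invertible_matrix_inv)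
qed (auto simp: GLZ_def invertible_mult invertible_mat_1 matrix_mul_assoc)

lemma fst_hom_GLZ: "fst \<in> hom rotor_group GLZ"
  by (rule homI) (auto simp: GLZ_def rotor_carrier rotor_mult)

lemma section_hom_GLZ: "(\<lambda>A. (A, 0)) \<in> hom GLZ rotor_group"
  by (rule homI) (auto simp: GLZ_def rotor_carrier rotor_mult)

lemma kernel_fst_eq_N_set: "kernel rotor_group GLZ fst = N_set"
  unfolding kernel_def N_set_def GLZ_def by (auto simp: rotor_carrier invertible_mat_1)

lemma H_set_eq_image: "H_set = (\<lambda>A. (A, 0)) ` carrier GLZ"
  unfolding H_set_def GLZ_def by auto

lemma N_set_normal: "N_set \<lhd> rotor_group"
proof -
  interpret group_hom "rotor_group :: ((int^'n^'n) \<times> (torus^'n^'n)) monoid" GLZ fst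
    by (intro group_hom.intro group_hom_axioms.intro rotor_group_is_group GLZ_group fst_hom_GLZ)
  show ?thesis
    using normal_kernel by (simp only: kernel_fst_eq_N_set)
qed

lemma H_set_subgroup: "subgroup H_set rotor_group"
proof -
  interpret group_hom GLZ "rotor_group :: ((int^'n^'n) \<times> (torus^'n^'n)) monoid" "\<lambda>A. (A, 0)"
    by (intro group_hom.intro group_hom_axioms.intro rotor_group_is_group GLZ_group section_hom_GLZ)
  show ?thesis
    using img_is_subgroup by (simp only: H_set_eq_image)
qed

lemma N_set_iso_U1_pow:
  "(rotor_group :: ((int^'n^'n) \<times> (torus^'n^'n)) monoid)\<lparr>carrier := N_set\<rparr>
    \<cong> (U1_pow :: (torus^'n^'n) monoid)"
  by (rule is_isoI[where h = snd])
    (auto intro!: homI simp: iso_def bij_betw_def inj_on_def N_set_def U1_pow_def rotor_mult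
      matrix_inv_mat_1 image_iff)

lemma H_set_iso_GLZ:
  "(rotor_group :: ((int^'n^'n) \<times> (torus^'n^'n)) monoid)\<lparr>carrier := H_set\<rparr>
    \<cong> (GLZ :: (int^'n^'n) monoid)"
  by (rule is_isoI[where h = fst])
    (auto intro!: homI simp: iso_def bij_betw_def inj_on_def H_set_def GLZ_def rotor_mult image_iff)

lemma carrier_eq_H_set_N_set:
  "carrier (rotor_group :: ((int^'n^'n) \<times> (torus^'n^'n)) monoid)
    = H_set <#>\<^bsub>rotor_group\<^esub> N_set" (is "?G = ?HN")
proof
  show "?HN \<subseteq> ?G"
    using H_set_subgroup normal_imp_subgroup[OF N_set_normal]
    by (intro monoid.set_mult_closed[OF group.is_monoid[OF rotor_group_is_group]])
      (auto dest: subgroup.subset)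
  show "?G \<subseteq> ?HN"
  proof (clarify)
    fix A :: "int^'n^'n" and B :: "torus^'n^'n"
    assume AB: "(A, B) \<in> carrier rotor_group"
    then have "(A, B) = (A, 0) \<otimes>\<^bsub>rotor_group\<^esub> (mat 1, imult (transpose A) B)"
      by (simp add: rotor_carrier rotor_mult imult_inv_transpose_cancel)
    moreover have "(A, 0) \<in> H_set" and "(mat 1, imult (transpose A) B) \<in> N_set"
      using AB by (auto simp: rotor_carrier H_set_def N_set_def)
    ultimately show "(A, B) \<in> H_set <#>\<^bsub>rotor_group\<^esub> N_set"
      unfolding set_mult_def by blast
  qed
qed

lemma conj_action_mult:
  fixes A1 A2 :: "int^'n^'n"
  assumes "invertible A1" and "invertible A2"
  shows "conj_action (A1 ** A2) C = conj_action A1 (conj_action A2 C)"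
  using assms by (simp add: conj_action_eq_matrix_congr matrix_inv_mult matrix_congr_mult)

lemma conj_action_in_auto:
  assumes "invertible (A :: int^'n^'n)"
  shows "(\<lambda>C\<in>carrier U1_pow. conj_action A C) \<in> auto U1_pow"
proof -
  let ?S = "carrier U1_pow"
  have hom: "(\<lambda>C\<in>?S. conj_action A C) \<in> hom U1_pow U1_pow"
    by (rule homI)
      (auto simp: U1_pow_def conj_action_eq_matrix_congr transpose_matrix_congr matrix_congr_add
        transpose_add)
  have "bij_betw (\<lambda>C\<in>?S. conj_action A C) ?S ?S"
    by (rule bij_betw_byWitness[where f' = "conj_action (matrix_inv A)"])
      (use assms in \<open>auto simp: U1_pow_def conj_action_eq_matrix_congr transpose_matrix_congr
         matrix_inv_matrix_inv matrix_congr_inv_congr matrix_congr_congr_inv\<close>)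
  with hom show ?thesis
    unfolding auto_def Bij_def by auto
qed

lemma conj_action_hom:
  "(\<lambda>A\<in>carrier GLZ. \<lambda>C\<in>carrier U1_pow. conj_action A C)
     \<in> hom GLZ (AutoGroup U1_pow)"
proof (rule homI)
  let ?S = "carrier U1_pow"
  fix A1 A2 :: "int^'n^'n"
  assume A1: "A1 \<in> carrier GLZ" and A2: "A2 \<in> carrier GLZ"
  then have "invertible A1" and "invertible A2"
    by (simp_all add: GLZ_def)
  then have "(\<lambda>C\<in>?S. conj_action (A1 ** A2) C)
      = compose ?S (\<lambda>C\<in>?S. conj_action A1 C) (\<lambda>C\<in>?S. conj_action A2 C)"
    unfolding compose_def
    by (intro restrict_ext)
      (simp add: conj_action_mult U1_pow_def transpose_conj_action)
  with A1 A2 conj_action_in_auto[OF \<open>invertible A1\<close>] conj_action_in_auto[OF \<open>invertible A2\<close>]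
  show "(\<lambda>A\<in>carrier GLZ. \<lambda>C\<in>?S. conj_action A C) (A1 \<otimes>\<^bsub>GLZ\<^esub> A2) =
      (\<lambda>A\<in>carrier GLZ. \<lambda>C\<in>?S. conj_action A C) A1 \<otimes>\<^bsub>AutoGroup U1_pow\<^esub>
      (\<lambda>A\<in>carrier GLZ. \<lambda>C\<in>?S. conj_action A C) A2"
    by (simp add: AutoGroup_def BijGroup_def auto_def GLZ_def invertible_mult)
qed (use conj_action_in_auto in \<open>simp add: AutoGroup_def GLZ_def\<close>)

lemma rotor_group_iso_semidirect_prod:
  "(rotor_group :: ((int^'n^'n) \<times> (torus^'n^'n)) monoid)
    \<cong> semidirect_prod U1_pow (GLZ :: (int^'n^'n) monoid) conj_action"
  (is "?G \<cong> ?P")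
proof (rule is_isoI)
  let ?f = "\<lambda>(A, B). (multi B (matrix_inv A), A)"
  have carrier_P: "(C, A) \<in> carrier ?P \<longleftrightarrow> transpose C = C \<and> invertible A" for C A
    by (simp add: semidirect_prod_def U1_pow_def GLZ_def)
  have "?f \<in> hom ?G ?P"
    by (rule homI)
      (auto simp: carrier_P rotor_carrier_iff_factor rotor_mult rotor_mult_factor,
       simp add: semidirect_prod_def U1_pow_def GLZ_def)
  moreover have "bij_betw ?f (carrier ?G) (carrier ?P)"
    by (rule bij_betw_byWitness[where f' = "\<lambda>(C, A). (A, multi C A)"])
      (auto simp: carrier_P rotor_carrier_iff_factor multi_inv_cancel multi_cancel_inv)
  ultimately show "?f \<in> iso ?G ?P"
    unfolding iso_def by simp
qed

theorem theorem1:
  defines "G \<equiv> (rotor_group :: ((int^'n^'n) \<times> (torus^'n^'n)) monoid)"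
  shows "group G
    \<and> N_set \<lhd> G
    \<and> G\<lparr>carrier := N_set\<rparr> \<cong> (U1_pow :: (torus^'n^'n) monoid)
    \<and> subgroup H_set G
    \<and> G\<lparr>carrier := H_set\<rparr> \<cong> (GLZ :: (int^'n^'n) monoid)
    \<and> carrier G = H_set <#>\<^bsub>G\<^esub> N_set
    \<and> (\<lambda>A\<in>carrier GLZ. \<lambda>C\<in>carrier U1_pow. conj_action A C)
        \<in> hom (GLZ :: (int^'n^'n) monoid) (AutoGroup (U1_pow :: (torus^'n^'n) monoid))
    \<and> G \<cong> semidirect_prod (U1_pow :: (torus^'n^'n) monoid) (GLZ :: (int^'n^'n) monoid) conj_action"
  unfolding G_def
  using rotor_group_is_group N_set_normal N_set_iso_U1_pow H_set_subgroup H_set_iso_GLZ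
    carrier_eq_H_set_N_set conj_action_hom rotor_group_iso_semidirect_prod
  by blast

end
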